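(* Let $\mathcal{X}\subseteq\mathbb{R}^d$ be nonempty, closed and convex, and let $f=\frac1n\sum_{i=1}^nf_i$ with each $f_i:\mathbb{R}^d\to\mathbb{R}$ convex and differentiable. Assume $x_\star\in\operatorname{arg\,min}_{x\in\mathcal{X}}f(x)$ exists and each $f_i$ has a constrained minimizer $x_{\star,i}\in\operatorname{arg\,min}_{x\in\mathcal{X}}f_i(x)$; let $f_i^\star:=f_i(x_{\star,i})$ and $D:=\max_{1\le i\le n}\|x_{\star,i}-x_\star\|$. Assume $\|\nabla f_i(x)\|\le G$ for all $i$ and all $x\in\mathcal{X}$. Let $x_0\in\mathcal{X}$ and generate $\{x_k\}$ by sampling $i_k$ uniformly from $\{1,\dots,n\}$ independently of the past, setting $g_{i_k}=\nabla f_{i_k}(x_k)$, $t_k:=\frac{f_{i_k}(x_k)-f_{i_k}^\star}{\|g_{i_k}\|}$ if $g_{i_k}\ne0$ and $t_k:=0$ if $g_{i_k}=0$, and $x_{k+1}\in\operatorname{arg\,min}_{z\in\mathcal{X}\cap\mathcal{B}(x_k,t_k)}\langle g_{i_k},z\rangle$. Then for every $\eta\in(0,1)$ and $K\ge1$, $$\frac1K\sum_{k=0}^{K-1}\mathbb{E}\big[(f(x_k)-f(x_\star))^2\big]\le\frac{G^2\|x_0-x_\star\|^2}{(1-\eta)K}+\frac{G^2D^2}{\eta(1-\eta)},$$ and for $\hat x_K:=\frac1K\sum_{k=0}^{K-1}x_k$, $\mathbb{E}[f(\hat x_K)-f(x_\star)]\le\sqrt{\frac{G^2\|x_0-x_\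star\|^2}{(1-\eta)K}+\frac{G^2D^2}{\eta(1-\eta)}}$.
   Context: $\|\cdot\|$ is the Euclidean norm, $\mathcal{B}(x,t):=\{y:\|y-x\|\le t\}$. *)

theory Defs
  imports "HOL-Analysis.Analysis"
begin

text \<open>Index sequences i_0,...,i_{K-1} with each i_k in {0..<n} (indices shifted to start at 0).\<close>
definition index_seqs :: "nat \<Rightarrow> nat \<Rightarrow> nat list set" where
  "index_seqs n K = {is. set is \<subseteq> {..<n} \<and> length is = K}"

text \<open>Expectation w.r.t. i_0,...,i_{K-1} drawn i.i.d. uniformly from {0..<n}.\<close>
definition expect_seq :: "nat \<Rightarrow> nat \<Rightarrow> (nat list \<Rightarrow> real) \<Rightarrow> real" where
  "expect_seq n K h = (\<Sum>is\<in>index_seqs n K. h is) / real n ^ K"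

definition step_size :: "('a::real_normed_vector \<Rightarrow> real) \<Rightarrow> real \<Rightarrow> 'a \<Rightarrow> 'a \<Rightarrow> real" where
  "step_size fi fistar g x = (if g = 0 then 0 else (fi x - fistar) / norm g)"

end

theory Submission
  imports Defs
begin

text \<open>
  One step moves from \<open>p\<close> to a minimiser \<open>x1\<close> of \<open>\<langle>g, \<cdot>\<rangle>\<close> over \<open>X \<inter> cball p t\<close>.
  The gradient inequality puts the minimiser \<open>y\<close> of \<open>f\<^sub>i\<close> into the half-space
  \<open>\<langle>g, z - p\<rangle> \<le> -t \<parallel>g\<parallel>\<close>, and first-order optimality of \<open>x1\<close> then forces
  \<open>\<parallel>x1 - p\<parallel> = t\<close> (so \<open>f\<^sub>i p - f\<^sub>i y = t \<parallel>g\<parallel> \<le> G \<parallel>x1 - p\<parallel>\<close>) and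
  \<open>\<langle>x1 - p, y - x1\<rangle> \<ge> 0\<close>. Expanding \<open>\<parallel>x1 - x\<^sub>\<star>\<parallel>\<^sup>2\<close> and applying Young's inequality with
  parameter \<open>\<eta>\<close> yields
  \<open>G\<^sup>2 \<parallel>x1 - x\<^sub>\<star>\<parallel>\<^sup>2 \<le> G\<^sup>2 \<parallel>p - x\<^sub>\<star>\<parallel>\<^sup>2 - (1 - \<eta>) (f\<^sub>i p - f\<^sub>i\<^sup>\<star>)\<^sup>2 + G\<^sup>2 D\<^sup>2 / \<eta>\<close>.
  Averaging over \<open>i\<close> turns the middle term into at most \<open>-(1 - \<eta>) (f p - f x\<^sub>\<star>)\<^sup>2\<close>, because
  \<open>0 \<le> f p - f x\<^sub>\<star> \<le> mean\<^sub>i (f\<^sub>i p - f\<^sub>i\<^sup>\<star>)\<close>; telescoping the expectations gives the first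
  bound, and Jensen's inequality together with \<open>E Y \<le> sqrt (E Y\<^sup>2)\<close> gives the second.
\<close>

lemma convex_on_has_derivative_ge:
  fixes f :: "'a::real_normed_vector \<Rightarrow> real"
  assumes convex: "convex_on UNIV f" and deriv: "(f has_derivative f') (at p)"
  shows "f p + f' (y - p) \<le> f y"
proof -
  define v where "v = y - p"
  define \<phi> where "\<phi> = (\<lambda>s::real. f (p + s *\<^sub>R v))"
  have "convex_on UNIV \<phi>"
  proof (rule convex_onI)
    fix t a b :: real
    assume "0 < t" "t < 1"
    have "p + ((1 - t) *\<^sub>R a + t *\<^sub>R b) *\<^sub>R v = (1 - t) *\<^sub>R (p + a *\<^sub>R v) + t *\<^sub>R (p + b *\<^sub>R v)"
      by (simp add: algebra_simps)
    then show "\<phi> ((1 - t) *\<^sub>R a + t *\<^sub>R b) \<le> (1 - t) * \<phi> a + t * \<phi> b"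
      using convex_onD[OF convex, of t] \<open>0 < t\<close> \<open>t < 1\<close> by (simp add: \<phi>_def)
  qed simp
  moreover have "(\<phi> has_field_derivative f' v) (at 0)"
  proof -
    have "((\<lambda>s. p + s *\<^sub>R v) has_derivative (\<lambda>s. s *\<^sub>R v)) (at 0)"
      by (auto intro!: derivative_eq_intros)
    then have "(\<phi> has_derivative (\<lambda>s. f' (s *\<^sub>R v))) (at 0)"
      unfolding \<phi>_def using has_derivative_compose[of "\<lambda>s. p + s *\<^sub>R v" _ 0 UNIV f] deriv by simp
    moreover have "(\<lambda>s. f' (s *\<^sub>R v)) = (\<lambda>s. f' v * s)"
      using linear_scale[OF has_derivative_linear[OF deriv]] by (auto simp: mult.commute)
    ultimately show ?thesis by (simp add: has_field_derivative_def)
  qed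
  ultimately have "f' v * (1 - 0) \<le> \<phi> 1 - \<phi> 0"
    by (intro convex_on_imp_above_tangent) auto
  then show ?thesis by (simp add: \<phi>_def v_def)
qed

lemma short_step_in_cball:
  fixes d v :: "'a::real_inner"
  assumes "norm d \<le> t" and "norm d < t \<or> d \<bullet> v < 0"
  obtains s where "0 < s" "s \<le> 1" "norm (d + s *\<^sub>R v) \<le> t"
proof (cases "v = 0")
  case True
  with assms(1) show ?thesis by (intro that[of 1]) auto
next
  case False
  then have v: "norm v > 0" by simp
  show ?thesis
  proof (cases "norm d < t")
    case True
    define s where "s = min 1 ((t - norm d) / norm v)"
    have "s * norm v \<le> t - norm d"
      using v by (simp add: s_def min_def field_simps)
    moreover have "norm (d + s *\<^sub>R v) \<le> norm d + s * norm v"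
      using norm_triangle_ineq[of d "s *\<^sub>R v"] True v by (simp add: s_def)
    ultimately show ?thesis
      using True v by (intro that[of s]) (auto simp: s_def)
  next
    case False
    then have dv: "d \<bullet> v < 0" using assms(2) by simp
    define s where "s = min 1 (- (d \<bullet> v) / (norm v)\<^sup>2)"
    have s: "0 < s" "s \<le> 1" using dv v by (auto simp: s_def divide_neg_pos)
    have "s * (norm v)\<^sup>2 \<le> - (d \<bullet> v)"
      using v by (simp add: s_def min_def field_simps)
    then have "s * (s * (norm v)\<^sup>2) \<le> s * - (d \<bullet> v)"
      using s by (intro mult_left_mono) auto
    moreover have "(norm (d + s *\<^sub>R v))\<^sup>2 = (norm d)\<^sup>2 + 2 * s * (d \<bullet> v) + s * (s * (norm v)\<^sup>2)"
      unfolding power2_norm_eq_inner by (simp add: algebra_simps inner_commute)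
    ultimately have "(norm (d + s *\<^sub>R v))\<^sup>2 \<le> (norm d)\<^sup>2 + s * (d \<bullet> v)"
      by simp
    also have "\<dots> \<le> t\<^sup>2"
      using mult_pos_neg[OF \<open>0 < s\<close> dv] power_mono[OF assms(1) norm_ge_zero, of 2] by linarith
    finally have "(norm (d + s *\<^sub>R v))\<^sup>2 \<le> t\<^sup>2" .
    moreover have "0 \<le> t" using assms(1) norm_ge_zero order_trans by blast
    ultimately show ?thesis
      using s by (intro that[of s]) (auto intro: power2_le_imp_le)
  qed
qed

lemma cball_argmin_le_segment:
  fixes X :: "'a::real_inner set"
  assumes "convex X" and "x1 \<in> X" and "y \<in> X"
    and argmin: "\<forall>z\<in>X \<inter> cball p t. g \<bullet> x1 \<le> g \<bullet> z"
    and "0 < s" "s \<le> 1" and "x1 + s *\<^sub>R (y - x1) \<in> cball p t"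
  shows "g \<bullet> x1 \<le> g \<bullet> y"
proof -
  have "x1 + s *\<^sub>R (y - x1) = (1 - s) *\<^sub>R x1 + s *\<^sub>R y" by (simp add: algebra_simps)
  also have "\<dots> \<in> X" using assms by (simp add: convex_alt)
  finally have "g \<bullet> x1 \<le> g \<bullet> (x1 + s *\<^sub>R (y - x1))"
    using argmin assms(7) by blast
  then have "0 \<le> s * (g \<bullet> (y - x1))" by (simp add: inner_add_right)
  then show ?thesis using \<open>0 < s\<close> by (simp add: zero_le_mult_iff inner_diff_right)
qed

context
  fixes X :: "'a::real_inner set" and p x1 y g :: 'a and t :: real
  assumes convex_X: "convex X" and x1_in: "x1 \<in> X \<inter> cball p t"
    and x1_argmin: "\<forall>z\<in>X \<inter> cball p t. g \<bullet> x1 \<le> g \<bullet> z"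
    and y_in: "y \<in> X" and y_below: "g \<bullet> (y - p) \<le> - t * norm g"
begin

lemma cball_argmin_le_if_inward:
  assumes "norm (x1 - p) < t \<or> (x1 - p) \<bullet> (y - x1) < 0"
  shows "g \<bullet> x1 \<le> g \<bullet> y"
proof -
  have "norm (x1 - p) \<le> t" using x1_in by (simp add: dist_norm norm_minus_commute)
  then obtain s where s: "0 < s" "s \<le> 1" "norm ((x1 - p) + s *\<^sub>R (y - x1)) \<le> t"
    using assms by (rule short_step_in_cball)
  then have "x1 + s *\<^sub>R (y - x1) \<in> cball p t"
    by (simp add: dist_norm norm_minus_commute algebra_simps)
  with convex_X x1_in y_in x1_argmin s show ?thesis by (intro cball_argmin_le_segment) auto
qed

lemma cball_argmin_norm_eq:
  assumes "g \<noteq> 0"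
  shows "norm (x1 - p) = t"
proof (rule ccontr)
  assume "norm (x1 - p) \<noteq> t"
  moreover have "norm (x1 - p) \<le> t" using x1_in by (simp add: dist_norm norm_minus_commute)
  ultimately have less: "norm (x1 - p) < t" by simp
  then have "g \<bullet> (x1 - p) \<le> g \<bullet> (y - p)"
    using cball_argmin_le_if_inward by (simp add: inner_diff_right)
  also have "\<dots> \<le> - t * norm g" by (rule y_below)
  also have "\<dots> < - (norm g * norm (x1 - p))" using less assms by simp
  also have "\<dots> \<le> g \<bullet> (x1 - p)" using Cauchy_Schwarz_ineq2[of g "x1 - p"] by (simp add: abs_le_iff)
  finally show False by simp
qed

lemma cball_argmin_inner_nonneg:
  assumes "g = 0 \<Longrightarrow> t = 0"
  shows "0 \<le> (x1 - p) \<bullet> (y - x1)"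
proof (rule ccontr)
  assume neg: "\<not> ?thesis"
  have "norm (x1 - p) \<le> t" using x1_in by (simp add: dist_norm norm_minus_commute)
  show False
  proof (cases "g = 0")
    case True
    then have "x1 = p" using assms \<open>norm (x1 - p) \<le> t\<close> by simp
    then show False using neg by simp
  next
    case False
    txt \<open>The inequalities below collapse: \<open>x1 - p\<close> is a negative multiple of \<open>g\<close>
      (equality in Cauchy-Schwarz) and \<open>g\<close> is orthogonal to \<open>y - x1\<close>.\<close>
    define d where "d = x1 - p"
    have "g \<bullet> d \<le> g \<bullet> (y - p)"
      using neg cball_argmin_le_if_inward by (simp add: d_def inner_diff_right)
    moreover note y_below
    moreover have "- t * norm g \<le> - (norm g * norm d)"
      using mult_left_mono[OF \<open>norm (x1 - p) \<le> t\<close> norm_ge_zero[of g]] by (simp add: d_def mult.commute)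
    moreover have "- (norm g * norm d) \<le> g \<bullet> d"
      using Cauchy_Schwarz_ineq2[of g d] by (simp add: abs_le_iff)
    ultimately have "g \<bullet> (y - x1) = 0" and "(- g) \<bullet> d = norm (- g) * norm d"
      by (simp_all add: d_def inner_diff_right)
    then have "norm g *\<^sub>R d = - (norm d *\<^sub>R g)"
      unfolding norm_cauchy_schwarz_eq by simp
    then have "norm g * (d \<bullet> (y - x1)) = - norm d * (g \<bullet> (y - x1))"
      by (metis inner_minus_left inner_scaleR_left mult_minus_left)
    then show False using neg False \<open>g \<bullet> (y - x1) = 0\<close> by (simp add: d_def)
  qed
qed

end

lemma obtuse_step_dist_le:
  fixes p x1 y z :: "'a::real_inner"
  assumes obtuse: "0 \<le> (x1 - p) \<bullet> (y - x1)" and "norm (y - z) \<le> D" and "0 < \<eta>"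
  shows "(norm (x1 - z))\<^sup>2 \<le> (norm (p - z))\<^sup>2 - (1 - \<eta>) * (norm (x1 - p))\<^sup>2 + D\<^sup>2 / \<eta>"
proof -
  define d where "d = x1 - p"
  have "(norm (x1 - z))\<^sup>2 = (norm (p - z))\<^sup>2 - (norm d)\<^sup>2 + 2 * (d \<bullet> (x1 - y)) + 2 * (d \<bullet> (y - z))"
    unfolding d_def power2_norm_eq_inner by (simp add: algebra_simps inner_commute)
  also have "d \<bullet> (x1 - y) \<le> 0" using obtuse by (simp add: d_def inner_diff_right)
  also have "d \<bullet> (y - z) \<le> norm d * D"
    using norm_cauchy_schwarz[of d "y - z"] mult_left_mono[OF assms(2) norm_ge_zero[of d]] by linarith
  also have "2 * (norm d * D) \<le> \<eta> * (norm d)\<^sup>2 + D\<^sup>2 / \<eta>"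
  proof -
    have "0 \<le> (\<eta> * norm d - D)\<^sup>2 / \<eta>" using \<open>0 < \<eta>\<close> by simp
    also have "\<dots> = \<eta> * (norm d)\<^sup>2 + D\<^sup>2 / \<eta> - 2 * (norm d * D)"
      using \<open>0 < \<eta>\<close> by (simp add: power2_eq_square field_simps)
    finally show ?thesis by simp
  qed
  finally show ?thesis by (simp add: d_def algebra_simps)
qed

lemma polyak_step_dist_le:
  fixes X :: "'a::real_inner set" and fi :: "'a \<Rightarrow> real" and p y g :: 'a
  defines "t \<equiv> step_size fi (fi y) g p"
  assumes "convex X" and "p \<in> X" and "y \<in> X"
    and "convex_on UNIV fi" and deriv: "(fi has_derivative (\<lambda>h. g \<bullet> h)) (at p)"
    and y_min: "\<And>w. w \<in> X \<Longrightarrow> fi y \<le> fi w" and "norm g \<le> G"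
    and x1_in: "x1 \<in> X \<inter> cball p t" and x1_argmin: "\<forall>z\<in>X \<inter> cball p t. g \<bullet> x1 \<le> g \<bullet> z"
    and "0 < \<eta>" "\<eta> \<le> 1" and "norm (y - z) \<le> D"
  shows "G\<^sup>2 * (norm (x1 - z))\<^sup>2 \<le> G\<^sup>2 * (norm (p - z))\<^sup>2 - (1 - \<eta>) * (fi p - fi y)\<^sup>2 + G\<^sup>2 * D\<^sup>2 / \<eta>"
proof -
  have tangent: "fi p + g \<bullet> (y - p) \<le> fi y"
    by (rule convex_on_has_derivative_ge[OF \<open>convex_on UNIV fi\<close> deriv])
  have y_below: "g \<bullet> (y - p) \<le> - t * norm g"
    using tangent by (simp add: t_def step_size_def)
  have gap_nonneg: "0 \<le> fi p - fi y" using y_min[OF \<open>p \<in> X\<close>] by simp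
  have gap_le: "fi p - fi y \<le> G * norm (x1 - p)"
  proof (cases "g = 0")
    case True
    have "0 \<le> G * norm (x1 - p)" using order_trans[OF norm_ge_zero \<open>norm g \<le> G\<close>] by simp
    then show ?thesis using tangent True by simp
  next
    case False
    then have "fi p - fi y = norm g * norm (x1 - p)"
      using cball_argmin_norm_eq[OF \<open>convex X\<close> x1_in x1_argmin \<open>y \<in> X\<close> y_below]
      by (simp add: t_def step_size_def)
    also have "\<dots> \<le> G * norm (x1 - p)" using \<open>norm g \<le> G\<close> by (simp add: mult_right_mono)
    finally show ?thesis .
  qed
  have "0 \<le> (x1 - p) \<bullet> (y - x1)"
    using cball_argmin_inner_nonneg[OF \<open>convex X\<close> x1_in x1_argmin \<open>y \<in> X\<close> y_below]
    by (simp add: t_def step_size_def)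
  then have "G\<^sup>2 * (norm (x1 - z))\<^sup>2
      \<le> G\<^sup>2 * ((norm (p - z))\<^sup>2 - (1 - \<eta>) * (norm (x1 - p))\<^sup>2 + D\<^sup>2 / \<eta>)"
    using obtuse_step_dist_le[OF _ \<open>norm (y - z) \<le> D\<close> \<open>0 < \<eta>\<close>] by (simp add: mult_left_mono)
  moreover have "(1 - \<eta>) * (fi p - fi y)\<^sup>2 \<le> (1 - \<eta>) * (G\<^sup>2 * (norm (x1 - p))\<^sup>2)"
    using power_mono[OF gap_le gap_nonneg, of 2] \<open>\<eta> \<le> 1\<close>
    by (intro mult_left_mono) (simp_all add: power_mult_distrib)
  ultimately show ?thesis by (simp add: algebra_simps)
qed

lemma index_seqs_0: "index_seqs n 0 = {[]}"
  by (auto simp: index_seqs_def)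

lemma index_seqs_Suc:
  "index_seqs n (Suc K) = (\<lambda>(is, i). is @ [i]) ` (index_seqs n K \<times> {..<n})"
proof (rule set_eqI, rule iffI)
  fix js assume "js \<in> index_seqs n (Suc K)"
  then have "set js \<subseteq> {..<n}" "length js = Suc K" by (auto simp: index_seqs_def)
  then obtain "is" i where "js = is @ [i]" by (metis length_Suc_conv_rev)
  with \<open>set js \<subseteq> {..<n}\<close> \<open>length js = Suc K\<close>
  show "js \<in> (\<lambda>(is, i). is @ [i]) ` (index_seqs n K \<times> {..<n})"
    by (auto simp: index_seqs_def image_iff intro!: bexI[of _ "(is, i)"])
qed (auto simp: index_seqs_def)

lemma card_index_seqs: "card (index_seqs n K) = n ^ K"
  unfolding index_seqs_def by (subst card_lists_length_eq) simp_all

lemma expect_seq_0: "expect_seq n 0 h = h []"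
  by (simp add: expect_seq_def index_seqs_0)

lemma expect_seq_Suc:
  "expect_seq n (Suc K) h = expect_seq n K (\<lambda>is. (\<Sum>i<n. h (is @ [i])) / real n)"
proof -
  have "inj_on (\<lambda>(is, i). is @ [i]) (index_seqs n K \<times> {..<n})"
    by (auto simp: inj_on_def)
  then have "(\<Sum>js\<in>index_seqs n (Suc K). h js) = (\<Sum>(is, i)\<in>index_seqs n K \<times> {..<n}. h (is @ [i]))"
    unfolding index_seqs_Suc by (subst sum.reindex) (simp_all add: case_prod_beta)
  also have "\<dots> = (\<Sum>is\<in>index_seqs n K. \<Sum>i<n. h (is @ [i]))"
    by (rule sum.cartesian_product[symmetric])
  finally have "(\<Sum>js\<in>index_seqs n (Suc K). h js) = (\<Sum>is\<in>index_seqs n K. \<Sum>i<n. h (is @ [i]))" .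
  then show ?thesis
    by (simp add: expect_seq_def sum_divide_distrib[symmetric] field_simps)
qed

lemma expect_seq_cong:
  "(\<And>is. is \<in> index_seqs n K \<Longrightarrow> h is = h' is) \<Longrightarrow> expect_seq n K h = expect_seq n K h'"
  unfolding expect_seq_def by (simp cong: sum.cong)

lemma expect_seq_mono:
  "(\<And>is. is \<in> index_seqs n K \<Longrightarrow> h is \<le> h' is) \<Longrightarrow> expect_seq n K h \<le> expect_seq n K h'"
  unfolding expect_seq_def by (intro divide_right_mono sum_mono) auto

lemma expect_seq_add: "expect_seq n K (\<lambda>is. h is + h' is) = expect_seq n K h + expect_seq n K h'"
  unfolding expect_seq_def by (simp add: sum.distrib add_divide_distrib)

lemma expect_seq_diff: "expect_seq n K (\<lambda>is. h is - h' is) = expect_seq n K h - expect_seq n K h'"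
  unfolding expect_seq_def by (simp add: sum_subtractf diff_divide_distrib)

lemma expect_seq_mult_left: "expect_seq n K (\<lambda>is. c * h is) = c * expect_seq n K h"
  unfolding expect_seq_def by (simp add: sum_distrib_left[symmetric])

lemma expect_seq_sum: "expect_seq n K (\<lambda>is. \<Sum>k\<in>A. h k is) = (\<Sum>k\<in>A. expect_seq n K (h k))"
  unfolding expect_seq_def by (simp add: sum.swap[of _ A] sum_divide_distrib)

lemma expect_seq_const: "n > 0 \<Longrightarrow> expect_seq n K (\<lambda>_. c) = c"
  by (simp add: expect_seq_def card_index_seqs)

lemma expect_seq_take:
  assumes "n > 0" and "k \<le> K"
  shows "expect_seq n K (\<lambda>is. h (take k is)) = expect_seq n k h"
  using assms(2)
proof (induction K)
  case 0
  then show ?case by (simp add: expect_seq_0)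
next
  case (Suc K)
  show ?case
  proof (cases "k = Suc K")
    case True
    then show ?thesis by (auto intro: expect_seq_cong simp: index_seqs_def)
  next
    case False
    then have "k \<le> K" using Suc.prems by simp
    then have "expect_seq n (Suc K) (\<lambda>is. h (take k is)) = expect_seq n K (\<lambda>is. h (take k is))"
      unfolding expect_seq_Suc using \<open>n > 0\<close> by (intro expect_seq_cong) (simp add: index_seqs_def)
    with Suc.IH \<open>k \<le> K\<close> show ?thesis by simp
  qed
qed

lemma expect_seq_le_sqrt:
  assumes "n > 0"
  shows "expect_seq n K Y \<le> sqrt (expect_seq n K (\<lambda>is. (Y is)\<^sup>2))"
proof (rule real_le_rsqrt)
  have "(\<Sum>is\<in>index_seqs n K. Y is)\<^sup>2 \<le> (\<Sum>is\<in>index_seqs n K. (Y is)\<^sup>2) * real n ^ K"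
    using sum_squared_le_sum_of_squares[of Y "index_seqs n K"] by (simp add: card_index_seqs)
  then show "(expect_seq n K Y)\<^sup>2 \<le> expect_seq n K (\<lambda>is. (Y is)\<^sup>2)"
    using assms by (simp add: expect_seq_def power_mult[symmetric] power2_eq_square
        divide_le_eq field_simps)
qed

lemma expect_seq_supermartingale_sum_le:
  assumes "n > 0"
    and descent: "\<And>is. set is \<subseteq> {..<n} \<Longrightarrow> (\<Sum>i<n. R (is @ [i])) / real n \<le> R is - A is + c"
    and R_nonneg: "\<And>is. 0 \<le> R is"
  shows "(\<Sum>k<K. expect_seq n k A) \<le> R [] + real K * c"
proof -
  define r where "r k = expect_seq n k R" for k
  have "r (Suc k) \<le> r k - expect_seq n k A + c" for k
  proof -
    have "r (Suc k) \<le> expect_seq n k (\<lambda>is. R is - A is + c)"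
      unfolding r_def expect_seq_Suc by (intro expect_seq_mono descent) (simp add: index_seqs_def)
    then show ?thesis by (simp add: expect_seq_add expect_seq_diff expect_seq_const \<open>n > 0\<close> r_def)
  qed
  then have "(\<Sum>k<K. expect_seq n k A) \<le> (\<Sum>k<K. r k - r (Suc k) + c)"
    by (intro sum_mono) (simp add: algebra_simps)
  also have "\<dots> = r 0 - r K + real K * c"
    by (simp add: sum.distrib sum_lessThan_telescope')
  finally have "(\<Sum>k<K. expect_seq n k A) \<le> r 0 - r K + real K * c" .
  moreover have "0 \<le> r K"
    using expect_seq_mono[of n K "\<lambda>_. 0" R] R_nonneg by (simp add: r_def expect_seq_def)
  ultimately show ?thesis by (simp add: r_def expect_seq_0)
qed

lemma expect_seq_convex_average_le:
  fixes \<phi> :: "'a::real_vector \<Rightarrow> real" and y :: "nat \<Rightarrow> nat list \<Rightarrow> 'a"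
  assumes "convex_on UNIV \<phi>" and "n > 0" and "K > 0"
  shows "expect_seq n N (\<lambda>is. \<phi> ((\<Sum>k<K. y k is) /\<^sub>R real K) - c)
    \<le> sqrt ((\<Sum>k<K. expect_seq n N (\<lambda>is. (\<phi> (y k is) - c)\<^sup>2)) / real K)"
proof -
  define Y where "Y is = (\<Sum>k<K. \<phi> (y k is) - c) / real K" for "is"
  have jensen: "\<phi> ((\<Sum>k<K. y k is) /\<^sub>R real K) - c \<le> Y is" for "is"
  proof -
    have "\<phi> ((\<Sum>k<K. y k is) /\<^sub>R real K) = \<phi> (\<Sum>k<K. (1 / real K) *\<^sub>R y k is)"
      by (simp add: scaleR_sum_right divide_inverse_commute)
    also have "\<dots> \<le> (\<Sum>k<K. (1 / real K) * \<phi> (y k is))"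
      using \<open>K > 0\<close> by (intro convex_on_sum[OF _ _ \<open>convex_on UNIV \<phi>\<close>]) auto
    finally show ?thesis
      using \<open>K > 0\<close> by (simp add: Y_def sum_subtractf sum_divide_distrib[symmetric] field_simps)
  qed
  have mean_square: "(Y is)\<^sup>2 \<le> (\<Sum>k<K. (\<phi> (y k is) - c)\<^sup>2) / real K" for "is"
    using sum_squared_le_sum_of_squares[of "\<lambda>k. \<phi> (y k is) - c" "{..<K}"] \<open>K > 0\<close>
    by (simp add: Y_def power_divide pos_divide_le_eq power2_eq_square[of "real K"] mult.assoc)
  have "expect_seq n N (\<lambda>is. \<phi> ((\<Sum>k<K. y k is) /\<^sub>R real K) - c) \<le> expect_seq n N Y"
    using jensen by (rule expect_seq_mono)
  also have "\<dots> \<le> sqrt (expect_seq n N (\<lambda>is. (Y is)\<^sup>2))"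
    using \<open>n > 0\<close> by (rule expect_seq_le_sqrt)
  also have "\<dots> \<le> sqrt (expect_seq n N (\<lambda>is. (\<Sum>k<K. (\<phi> (y k is) - c)\<^sup>2) / real K))"
    using mean_square by (intro real_sqrt_le_mono expect_seq_mono)
  also have "\<dots> = sqrt ((\<Sum>k<K. expect_seq n N (\<lambda>is. (\<phi> (y k is) - c)\<^sup>2)) / real K)"
    by (simp add: expect_seq_sum expect_seq_mult_left divide_inverse_commute flip: sum_divide_distrib)
  finally show ?thesis .
qed

text \<open>
  \<open>x is\<close> is the iterate reached after drawing the indices \<open>is\<close>, so expectations are averages
  over index lists. \<open>D\<close> may be any bound on the distances \<open>\<parallel>xs i - xstar\<parallel>\<close>. Closedness
  and nonemptiness of \<open>X\<close> only serve to make the iterates exist, which is assumed here.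
\<close>
locale stochastic_polyak =
  fixes X :: "'a::real_inner set" and n :: nat
    and fs :: "nat \<Rightarrow> 'a \<Rightarrow> real" and gf :: "nat \<Rightarrow> 'a \<Rightarrow> 'a" and f :: "'a \<Rightarrow> real"
    and xstar :: 'a and xs :: "nat \<Rightarrow> 'a" and G D :: real and x :: "nat list \<Rightarrow> 'a"
  assumes convex_X: "convex X" and n_pos: "0 < n"
    and f_eq_mean: "f = (\<lambda>y. (\<Sum>i<n. fs i y) / real n)"
    and convex_fs: "\<And>i. i < n \<Longrightarrow> convex_on UNIV (fs i)"
    and fs_has_derivative: "\<And>i y. i < n \<Longrightarrow> (fs i has_derivative (\<lambda>h. gf i y \<bullet> h)) (at y)"
    and xstar_in_X: "xstar \<in> X" and xstar_min: "\<And>y. y \<in> X \<Longrightarrow> f xstar \<le> f y"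
    and xs_in_X: "\<And>i. i < n \<Longrightarrow> xs i \<in> X"
    and xs_min: "\<And>i y. i < n \<Longrightarrow> y \<in> X \<Longrightarrow> fs i (xs i) \<le> fs i y"
    and gf_bounded: "\<And>i y. i < n \<Longrightarrow> y \<in> X \<Longrightarrow> norm (gf i y) \<le> G"
    and xs_dist_le: "\<And>i. i < n \<Longrightarrow> norm (xs i - xstar) \<le> D"
    and x_Nil_in_X: "x [] \<in> X"
    and x_snoc: "\<And>is i. set is \<subseteq> {..<n} \<Longrightarrow> i < n \<Longrightarrow>
      x (is @ [i]) \<in> X \<inter> cball (x is) (step_size (fs i) (fs i (xs i)) (gf i (x is)) (x is)) \<and>
      (\<forall>z \<in> X \<inter> cball (x is) (step_size (fs i) (fs i (xs i)) (gf i (x is)) (x is)).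
         gf i (x is) \<bullet> x (is @ [i]) \<le> gf i (x is) \<bullet> z)"
begin

lemma x_in_X: "set is \<subseteq> {..<n} \<Longrightarrow> x is \<in> X"
proof (induction "is" rule: rev_induct)
  case Nil
  show ?case by (rule x_Nil_in_X)
next
  case (snoc i "is")
  then show ?case using x_snoc[of "is" i] by auto
qed

lemma convex_f: "convex_on UNIV f"
proof -
  have "convex_on UNIV (\<lambda>y. \<Sum>i<m. fs i y)" if "m \<le> n" for m
    using that by (induction m) (auto simp: convex_on_const intro!: convex_on_add convex_fs)
  then show ?thesis unfolding f_eq_mean using n_pos by (intro convex_on_cdiv) auto
qed

lemma suboptimality_sq_le_mean:
  assumes "p \<in> X"
  shows "(f p - f xstar)\<^sup>2 \<le> (\<Sum>i<n. (fs i p - fs i (xs i))\<^sup>2) / real n"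
proof -
  have "(\<Sum>i<n. fs i (xs i)) \<le> (\<Sum>i<n. fs i xstar)"
    by (intro sum_mono xs_min xstar_in_X) simp
  then have "f p - f xstar \<le> (\<Sum>i<n. fs i p - fs i (xs i)) / real n"
    by (simp add: f_eq_mean sum_subtractf diff_divide_distrib divide_right_mono)
  moreover have "0 \<le> f p - f xstar" using xstar_min[OF assms] by simp
  ultimately have "(f p - f xstar)\<^sup>2 \<le> ((\<Sum>i<n. fs i p - fs i (xs i)) / real n)\<^sup>2"
    by (rule power_mono)
  also have "\<dots> \<le> (\<Sum>i<n. (fs i p - fs i (xs i))\<^sup>2) / real n"
    using sum_squared_le_sum_of_squares[of "\<lambda>i. fs i p - fs i (xs i)" "{..<n}"] n_pos
    by (simp add: power_divide pos_divide_le_eq power2_eq_square[of "real n"] mult.assoc)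
  finally show ?thesis .
qed

lemma mean_next_dist_sq_le:
  assumes "set is \<subseteq> {..<n}" and "0 < \<eta>" "\<eta> \<le> 1"
  shows "(\<Sum>i<n. G\<^sup>2 * (norm (x (is @ [i]) - xstar))\<^sup>2) / real n
    \<le> G\<^sup>2 * (norm (x is - xstar))\<^sup>2 - (1 - \<eta>) * (f (x is) - f xstar)\<^sup>2 + G\<^sup>2 * D\<^sup>2 / \<eta>"
proof -
  define p where "p = x is"
  have "p \<in> X" using x_in_X[OF assms(1)] by (simp add: p_def)
  have "(\<Sum>i<n. G\<^sup>2 * (norm (x (is @ [i]) - xstar))\<^sup>2)
      \<le> (\<Sum>i<n. G\<^sup>2 * (norm (p - xstar))\<^sup>2 - (1 - \<eta>) * (fs i p - fs i (xs i))\<^sup>2 + G\<^sup>2 * D\<^sup>2 / \<eta>)"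
    using x_snoc[OF assms(1)] \<open>p \<in> X\<close> assms(2,3)
    by (intro sum_mono polyak_step_dist_le[OF convex_X _ xs_in_X convex_fs fs_has_derivative xs_min
          gf_bounded _ _ _ _ xs_dist_le]) (auto simp: p_def)
  also have "\<dots> = real n * (G\<^sup>2 * (norm (p - xstar))\<^sup>2 + G\<^sup>2 * D\<^sup>2 / \<eta>)
      - (1 - \<eta>) * (\<Sum>i<n. (fs i p - fs i (xs i))\<^sup>2)"
    by (simp add: sum.distrib sum_subtractf sum_distrib_left algebra_simps)
  finally have "(\<Sum>i<n. G\<^sup>2 * (norm (x (is @ [i]) - xstar))\<^sup>2) / real n
      \<le> (real n * (G\<^sup>2 * (norm (p - xstar))\<^sup>2 + G\<^sup>2 * D\<^sup>2 / \<eta>)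
          - (1 - \<eta>) * (\<Sum>i<n. (fs i p - fs i (xs i))\<^sup>2)) / real n"
    by (rule divide_right_mono) simp
  also have "\<dots> = G\<^sup>2 * (norm (p - xstar))\<^sup>2 + G\<^sup>2 * D\<^sup>2 / \<eta>
      - (1 - \<eta>) * ((\<Sum>i<n. (fs i p - fs i (xs i))\<^sup>2) / real n)"
    using n_pos by (simp add: field_simps)
  also have "\<dots> \<le> G\<^sup>2 * (norm (p - xstar))\<^sup>2 + G\<^sup>2 * D\<^sup>2 / \<eta> - (1 - \<eta>) * (f p - f xstar)\<^sup>2"
    using mult_left_mono[OF suboptimality_sq_le_mean[OF \<open>p \<in> X\<close>], of "1 - \<eta>"] assms(3) by simp
  finally show ?thesis by (simp add: p_def)
qed

theorem mean_expected_suboptimality_sq_le: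
  assumes "0 < \<eta>" "\<eta> < 1" "0 < K"
  shows "(\<Sum>k<K. expect_seq n K (\<lambda>is. (f (x (take k is)) - f xstar)\<^sup>2)) / real K
    \<le> G\<^sup>2 * (norm (x [] - xstar))\<^sup>2 / ((1 - \<eta>) * real K) + G\<^sup>2 * D\<^sup>2 / (\<eta> * (1 - \<eta>))"
proof -
  have "(\<Sum>k<K. expect_seq n k (\<lambda>is. (1 - \<eta>) * (f (x is) - f xstar)\<^sup>2))
      \<le> G\<^sup>2 * (norm (x [] - xstar))\<^sup>2 + real K * (G\<^sup>2 * D\<^sup>2 / \<eta>)"
    using mean_next_dist_sq_le assms
    by (intro expect_seq_supermartingale_sum_le[OF n_pos]) (simp_all add: sum_divide_distrib)
  moreover have "(\<Sum>k<K. expect_seq n K (\<lambda>is. (f (x (take k is)) - f xstar)\<^sup>2))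
      = (\<Sum>k<K. expect_seq n k (\<lambda>is. (f (x is) - f xstar)\<^sup>2))"
    by (intro sum.cong refl expect_seq_take[OF n_pos]) simp
  ultimately have "(1 - \<eta>) * (\<Sum>k<K. expect_seq n K (\<lambda>is. (f (x (take k is)) - f xstar)\<^sup>2))
      \<le> G\<^sup>2 * (norm (x [] - xstar))\<^sup>2 + real K * (G\<^sup>2 * D\<^sup>2 / \<eta>)"
    by (simp add: expect_seq_mult_left sum_distrib_left)
  then have "(\<Sum>k<K. expect_seq n K (\<lambda>is. (f (x (take k is)) - f xstar)\<^sup>2)) / real K
      \<le> (G\<^sup>2 * (norm (x [] - xstar))\<^sup>2 + real K * (G\<^sup>2 * D\<^sup>2 / \<eta>)) / ((1 - \<eta>) * real K)"
    using assms by (simp add: pos_le_divide_eq ac_simps)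
  also have "\<dots> = G\<^sup>2 * (norm (x [] - xstar))\<^sup>2 / ((1 - \<eta>) * real K) + G\<^sup>2 * D\<^sup>2 / (\<eta> * (1 - \<eta>))"
    using assms by (simp add: add_divide_distrib ac_simps)
  finally show ?thesis .
qed

theorem expected_suboptimality_of_average_le:
  assumes "0 < \<eta>" "\<eta> < 1" "0 < K"
  shows "expect_seq n K (\<lambda>is. f ((\<Sum>k<K. x (take k is)) /\<^sub>R real K) - f xstar)
    \<le> sqrt (G\<^sup>2 * (norm (x [] - xstar))\<^sup>2 / ((1 - \<eta>) * real K) + G\<^sup>2 * D\<^sup>2 / (\<eta> * (1 - \<eta>)))"
  using expect_seq_convex_average_le[OF convex_f n_pos \<open>0 < K\<close>, of K "\<lambda>k is. x (take k is)" "f xstar"]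
    mean_expected_suboptimality_sq_le[OF assms]
  by (meson order_trans real_sqrt_le_mono)

end

theorem theorem11:
  fixes X :: "'a::euclidean_space set"
    and n :: nat
    and fs :: "nat \<Rightarrow> 'a \<Rightarrow> real"
    and gf :: "nat \<Rightarrow> 'a \<Rightarrow> 'a"
    and xstar x0 :: 'a
    and xs :: "nat \<Rightarrow> 'a"
    and G :: real
    and x :: "nat list \<Rightarrow> 'a"
  defines "f \<equiv> (\<lambda>y. (\<Sum>i<n. fs i y) / real n)"
      and "fstar \<equiv> (\<lambda>i. fs i (xs i))"
      and "D \<equiv> Max ((\<lambda>i. norm (xs i - xstar)) ` {..<n})"
  assumes "X \<noteq> {}" and "closed X" and "convex X"
      and "n \<ge> 1"
      and "\<And>i. i < n \<Longrightarrow> convex_on UNIV (fs i)"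
      and "\<And>i y. i < n \<Longrightarrow> (fs i has_derivative (\<lambda>h. gf i y \<bullet> h)) (at y)"
      and "xstar \<in> X" and "\<And>y. y \<in> X \<Longrightarrow> f xstar \<le> f y"
      and "\<And>i. i < n \<Longrightarrow> xs i \<in> X"
      and "\<And>i y. i < n \<Longrightarrow> y \<in> X \<Longrightarrow> fs i (xs i) \<le> fs i y"
      and "\<And>i y. i < n \<Longrightarrow> y \<in> X \<Longrightarrow> norm (gf i y) \<le> G"
      and "x0 \<in> X"
      and "x [] = x0"
      and "\<And>is i. set is \<subseteq> {..<n} \<Longrightarrow> i < n \<Longrightarrow>
             x (is @ [i]) \<in> X \<inter> cball (x is) (step_size (fs i) (fstar i) (gf i (x is)) (x is)) \<and>
             (\<forall>z \<in> X \<inter> cball (x is) (step_size (fs i) (fstar i) (gf i (x is)) (x is)).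
                 gf i (x is) \<bullet> x (is @ [i]) \<le> gf i (x is) \<bullet> z)"
  shows "\<forall>\<eta> K. 0 < \<eta> \<and> \<eta> < 1 \<and> K \<ge> 1 \<longrightarrow>
           (let B = G\<^sup>2 * (norm (x0 - xstar))\<^sup>2 / ((1 - \<eta>) * real K) + G\<^sup>2 * D\<^sup>2 / (\<eta> * (1 - \<eta>)) in
             (\<Sum>k<K. expect_seq n K (\<lambda>is. (f (x (take k is)) - f xstar)\<^sup>2)) / real K \<le> B
           \<and> expect_seq n K (\<lambda>is. f ((\<Sum>k<K. x (take k is)) /\<^sub>R real K) - f xstar) \<le> sqrt B)"
proof -
  interpret stochastic_polyak X n fs gf f xstar xs G D x
  proof
    show "norm (xs i - xstar) \<le> D" if "i < n" for i
      unfolding D_def using that by (intro Max_ge) auto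
  qed (use assms in \<open>auto simp: f_def fstar_def\<close>)
  show ?thesis
    using mean_expected_suboptimality_sq_le expected_suboptimality_of_average_le
    by (auto simp: Let_def \<open>x [] = x0\<close>)
qed

end
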